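(* Let $\mathbb F$ be algebraically closed with $\operatorname{char}\mathbb F\neq 2$. For any $a,b,c\in\mathbb F$ and $d\in\mathbb N$ there exists a $(d+1)$-dimensional $\Re$-module with an $\mathbb F$-basis $v_0,\dots,v_d$ such that $Av_i=\theta_iv_i+v_{i+1}$ (with $v_{d+1}=0$) and $Bv_i=\theta_i^*v_i+\varphi_iv_{i-1}$ (with $v_{-1}=0$) for $0\le i\le d$, and on which $\alpha,\beta,\delta$ act as scalar multiplication by $(c-b)(c+b+1)(a-\tfrac d2)(a+\tfrac d2+1)$, $(a-c)(a+c+1)(b-\tfrac d2)(b+\tfrac d2+1)$, and $\tfrac d2(\tfrac d2+1)+a(a+1)+b(b+1)+c(c+1)$, respectively.
   Context: The Racah algebra $\Re$ is the unital associative $\mathbb F$-algebra with generators $A,B,C,D$ and relations $[A,B]=[B,C]=[C,A]=2D$ together with the requirement that each of $\alpha:=[A,D]+AC-BA$, $\beta:=[B,D]+BA-CB$, $\gamma:=[C,D]+CB-AC$ is central in $\Re$; $\delta:=A+B+C$. Here $\theta_i=(a+\tfrac d2-i)(a+\tfrac d2-i+1)$, $\theta_i^*=(b+\tfrac d2-i)(b+\tfrac d2-i+1)$, $\varphi_i=i(i-d-1)(a+b+c+\tfrac d2-i+2)(a+b-c+\tfrac d2-i+1)$. *)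

theory Defs
  imports "Jordan_Normal_Form.Matrix" "HOL-Computational_Algebra.Polynomial"
begin

definition alg_closed_field :: "'a::field itself \<Rightarrow> bool" where
  "alg_closed_field _ \<longleftrightarrow> (\<forall>p :: 'a poly. degree p \<ge> 1 \<longrightarrow> (\<exists>x. poly p x = 0))"

definition mcomm :: "'a::comm_ring mat \<Rightarrow> 'a mat \<Rightarrow> 'a mat" where
  "mcomm X Y = X * Y - Y * X"

definition racah_alpha :: "'a::comm_ring mat \<Rightarrow> 'a mat \<Rightarrow> 'a mat \<Rightarrow> 'a mat \<Rightarrow> 'a mat" where
  "racah_alpha A B C D = mcomm A D + A * C - B * A"
definition racah_beta :: "'a::comm_ring mat \<Rightarrow> 'a mat \<Rightarrow> 'a mat \<Rightarrow> 'a mat \<Rightarrow> 'a mat" where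
  "racah_beta A B C D = mcomm B D + B * A - C * B"
definition racah_gamma :: "'a::comm_ring mat \<Rightarrow> 'a mat \<Rightarrow> 'a mat \<Rightarrow> 'a mat \<Rightarrow> 'a mat" where
  "racah_gamma A B C D = mcomm C D + C * B - A * C"

text \<open>Matrices of the generators A, B, C, D acting on F^n (w.r.t. a fixed basis)
  that define a module of the Racah algebra: the defining relations hold and the
  images of alpha, beta, gamma commute with the images of all generators
  (hence with the image of the whole algebra).\<close>
definition racah_module :: "nat \<Rightarrow> 'a::comm_ring_1 mat \<Rightarrow> 'a mat \<Rightarrow> 'a mat \<Rightarrow> 'a mat \<Rightarrow> bool" where
  "racah_module n A B C D \<longleftrightarrow>
     A \<in> carrier_mat n n \<and> B \<in> carrier_mat n n \<and> C \<in> carrier_mat n n \<and> D \<in> carrier_mat n n \<and>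
     mcomm A B = 2 \<cdot>\<^sub>m D \<and> mcomm B C = 2 \<cdot>\<^sub>m D \<and> mcomm C A = 2 \<cdot>\<^sub>m D \<and>
     (\<forall>Z \<in> {racah_alpha A B C D, racah_beta A B C D, racah_gamma A B C D}.
        \<forall>X \<in> {A, B, C, D}. Z * X = X * Z)"

definition theta :: "'a::field \<Rightarrow> nat \<Rightarrow> nat \<Rightarrow> 'a" where
  "theta a d i = (a + of_nat d / 2 - of_nat i) * (a + of_nat d / 2 - of_nat i + 1)"

definition phi :: "'a::field \<Rightarrow> 'a \<Rightarrow> 'a \<Rightarrow> nat \<Rightarrow> nat \<Rightarrow> 'a" where
  "phi a b c d i = of_nat i * (of_nat i - of_nat d - 1)
     * (a + b + c + of_nat d / 2 - of_nat i + 2) * (a + b - c + of_nat d / 2 - of_nat i + 1)"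

end

theory Submission
  imports Defs
begin

text \<open>Take A lower bidiagonal with diagonal \<open>\<theta>\<^sub>i\<close> and subdiagonal 1, B upper bidiagonal
  with diagonal \<open>\<theta>\<^sup>*\<^sub>i\<close> and superdiagonal \<open>\<phi>\<^sub>i\<close>, \<open>D = [A,B]/2\<close> and
  \<open>C = \<delta> - A - B\<close>. Then \<open>[B,C] = [C,A] = [A,B] = 2D\<close> hold automatically, and since
  \<open>\<alpha> + \<beta> + \<gamma> = [A + B + C, D] = 0\<close> it only remains to see that \<open>\<alpha>\<close> and \<open>\<beta>\<close>
  act as the stated scalars.

  A matrix is encoded by its entries indexed by (row, column - row), extended to all of
  \<open>\<int> \<times> \<int>\<close>. Multiplication by A or B then becomes a shift formula on these functions;
  truncating back to \<open>d + 1\<close> rows and columns is harmless because \<open>\<phi>\<^sub>0 = \<phi>\<^bsub>d+1\<^esub> = 0\<close>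
  and the extended entries vanish just outside the matrix. In this encoding \<open>\<alpha>\<close> and \<open>\<beta>\<close>
  only have offsets -2..2, and on each offset the required identity is polynomial in the row.\<close>

definition offset_mat :: "nat \<Rightarrow> (int \<times> int \<Rightarrow> 'a) \<Rightarrow> 'a mat" where
  "offset_mat n g = mat n n (\<lambda>(i, j). g (int i, int j - int i))"

definition offset_one :: "int \<times> int \<Rightarrow> 'a::zero_neq_one" where
  "offset_one = (\<lambda>(r, k). if k = 0 then 1 else 0)"

definition vanishes_above :: "(int \<times> int \<Rightarrow> 'a::zero) \<Rightarrow> bool" where
  "vanishes_above g \<longleftrightarrow> (\<forall>r k. r < 0 \<longrightarrow> 0 \<le> r + k \<longrightarrow> g (r, k) = 0)"

definition vanishes_right :: "nat \<Rightarrow> (int \<times> int \<Rightarrow> 'a::zero) \<Rightarrow> bool" where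
  "vanishes_right n g \<longleftrightarrow> (\<forall>r k. r < int n \<longrightarrow> int n \<le> r + k \<longrightarrow> g (r, k) = 0)"

definition lower_times :: "(int \<Rightarrow> 'a::semiring_1) \<Rightarrow> (int \<times> int \<Rightarrow> 'a) \<Rightarrow> int \<times> int \<Rightarrow> 'a" where
  "lower_times t g = (\<lambda>(r, k). t r * g (r, k) + g (r - 1, k + 1))"

definition upper_times :: "(int \<Rightarrow> 'a::semiring_1) \<Rightarrow> (int \<Rightarrow> 'a) \<Rightarrow> (int \<times> int \<Rightarrow> 'a) \<Rightarrow> int \<times> int \<Rightarrow> 'a" where
  "upper_times s p g = (\<lambda>(r, k). s r * g (r, k) + p (r + 1) * g (r + 1, k - 1))"

definition times_lower :: "(int \<times> int \<Rightarrow> 'a::semiring_1) \<Rightarrow> (int \<Rightarrow> 'a) \<Rightarrow> int \<times> int \<Rightarrow> 'a" where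
  "times_lower g t = (\<lambda>(r, k). g (r, k) * t (r + k) + g (r, k + 1))"

definition times_upper :: "(int \<times> int \<Rightarrow> 'a::semiring_1) \<Rightarrow> (int \<Rightarrow> 'a) \<Rightarrow> (int \<Rightarrow> 'a) \<Rightarrow> int \<times> int \<Rightarrow> 'a" where
  "times_upper g s p = (\<lambda>(r, k). g (r, k) * s (r + k) + g (r, k - 1) * p (r + k))"

definition lower_bidiag :: "nat \<Rightarrow> (int \<Rightarrow> 'a::semiring_1) \<Rightarrow> 'a mat" where
  "lower_bidiag n t = offset_mat n (lower_times t offset_one)"

definition upper_bidiag :: "nat \<Rightarrow> (int \<Rightarrow> 'a::semiring_1) \<Rightarrow> (int \<Rightarrow> 'a) \<Rightarrow> 'a mat" where
  "upper_bidiag n s p = offset_mat n (upper_times s p offset_one)"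

lemma offset_mat_carrier [simp]: "offset_mat n g \<in> carrier_mat n n"
  by (simp add: offset_mat_def)

lemma offset_mat_dim [simp]: "dim_row (offset_mat n g) = n" "dim_col (offset_mat n g) = n"
  by (simp_all add: offset_mat_def)

lemma offset_mat_index [simp]:
  "i < n \<Longrightarrow> j < n \<Longrightarrow> offset_mat n g $$ (i, j) = g (int i, int j - int i)"
  by (simp add: offset_mat_def)

lemma offset_mat_cong: "(\<And>x. f x = g x) \<Longrightarrow> offset_mat n f = offset_mat n g"
  by (simp add: offset_mat_def)

lemma offset_mat_add: "offset_mat n f + offset_mat n g = offset_mat n (\<lambda>x. f x + g x)"
  by (rule eq_matI) auto

lemma offset_mat_diff: "offset_mat n f - offset_mat n g = offset_mat n (\<lambda>x. f x - g x)"
  by (rule eq_matI) auto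

lemma offset_mat_smult: "z \<cdot>\<^sub>m offset_mat n g = offset_mat n (\<lambda>x. z * g x)"
  by (rule eq_matI) auto

lemma offset_mat_one: "offset_mat n offset_one = 1\<^sub>m n"
  by (rule eq_matI) (auto simp: offset_one_def)

lemma sum_lessThan_if_int_eq:
  "(\<Sum>l<n. if int l = m then h l else 0) = (if 0 \<le> m \<and> m < int n then h (nat m) else 0)"
proof -
  have "(\<Sum>l<n. if int l = m then h l else 0) = (\<Sum>l<n. if l = nat m \<and> 0 \<le> m then h l else 0)"
    by (rule sum.cong) auto
  then show ?thesis by (auto simp: sum.If_cases)
qed

lemma offset_mat_mult_index:
  assumes "i < n" "j < n"
  shows "(offset_mat n f * offset_mat n g) $$ (i, j)
    = (\<Sum>l<n. f (int i, int l - int i) * g (int l, int j - int l))"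
  using assms by (simp add: scalar_prod_def lessThan_atLeast0)

lemma lower_bidiag_mult_offset_mat:
  assumes "vanishes_above g"
  shows "lower_bidiag n t * offset_mat n g = offset_mat n (lower_times t g)"
proof (rule eq_matI)
  fix i j
  assume "i < dim_row (offset_mat n (lower_times t g))" "j < dim_col (offset_mat n (lower_times t g))"
  then have i: "i < n" and j: "j < n" by simp_all
  have "(lower_bidiag n t * offset_mat n g) $$ (i, j) =
      (\<Sum>l<n. (if int l = int i then t (int i) * g (int i, int j - int i) else 0)
        + (if int l = int i - 1 then g (int i - 1, int j - (int i - 1)) else 0))"
    unfolding lower_bidiag_def offset_mat_mult_index[OF i j]
    by (rule sum.cong) (auto simp: lower_times_def offset_one_def)
  also have "\<dots> = lower_times t g (int i, int j - int i)"
    using assms i unfolding sum.distrib sum_lessThan_if_int_eq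
    by (auto simp: lower_times_def vanishes_above_def algebra_simps)
  finally show "(lower_bidiag n t * offset_mat n g) $$ (i, j)
      = offset_mat n (lower_times t g) $$ (i, j)"
    using i j by simp
qed (simp_all add: lower_bidiag_def)

lemma upper_bidiag_mult_offset_mat:
  assumes "p (int n) = 0"
  shows "upper_bidiag n s p * offset_mat n g = offset_mat n (upper_times s p g)"
proof (rule eq_matI)
  fix i j
  assume "i < dim_row (offset_mat n (upper_times s p g))" "j < dim_col (offset_mat n (upper_times s p g))"
  then have i: "i < n" and j: "j < n" by simp_all
  have "(upper_bidiag n s p * offset_mat n g) $$ (i, j) =
      (\<Sum>l<n. (if int l = int i then s (int i) * g (int i, int j - int i) else 0)
        + (if int l = int i + 1 then p (int i + 1) * g (int i + 1, int j - (int i + 1)) else 0))"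
    unfolding upper_bidiag_def offset_mat_mult_index[OF i j]
    by (rule sum.cong) (auto simp: upper_times_def offset_one_def)
  also have "\<dots> = upper_times s p g (int i, int j - int i)"
    using assms i unfolding sum.distrib sum_lessThan_if_int_eq
    by (cases "Suc i = n") (auto simp: upper_times_def algebra_simps)
  finally show "(upper_bidiag n s p * offset_mat n g) $$ (i, j)
      = offset_mat n (upper_times s p g) $$ (i, j)"
    using i j by simp
qed (simp_all add: upper_bidiag_def)

lemma offset_mat_mult_lower_bidiag:
  assumes "vanishes_right n g"
  shows "offset_mat n g * lower_bidiag n t = offset_mat n (times_lower g t)"
proof (rule eq_matI)
  fix i j
  assume "i < dim_row (offset_mat n (times_lower g t))" "j < dim_col (offset_mat n (times_lower g t))"
  then have i: "i < n" and j: "j < n" by simp_all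
  have "(offset_mat n g * lower_bidiag n t) $$ (i, j) =
      (\<Sum>l<n. (if int l = int j then g (int i, int j - int i) * t (int j) else 0)
        + (if int l = int j + 1 then g (int i, int j + 1 - int i) else 0))"
    unfolding lower_bidiag_def offset_mat_mult_index[OF i j]
    by (rule sum.cong) (auto simp: lower_times_def offset_one_def)
  also have "\<dots> = times_lower g t (int i, int j - int i)"
    using assms i j unfolding sum.distrib sum_lessThan_if_int_eq
    by (auto simp: times_lower_def vanishes_right_def algebra_simps)
  finally show "(offset_mat n g * lower_bidiag n t) $$ (i, j)
      = offset_mat n (times_lower g t) $$ (i, j)"
    using i j by simp
qed (simp_all add: lower_bidiag_def)

lemma offset_mat_mult_upper_bidiag:
  assumes "p 0 = 0"
  shows "offset_mat n g * upper_bidiag n s p = offset_mat n (times_upper g s p)"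
proof (rule eq_matI)
  fix i j
  assume "i < dim_row (offset_mat n (times_upper g s p))" "j < dim_col (offset_mat n (times_upper g s p))"
  then have i: "i < n" and j: "j < n" by simp_all
  have "(offset_mat n g * upper_bidiag n s p) $$ (i, j) =
      (\<Sum>l<n. (if int l = int j then g (int i, int j - int i) * s (int j) else 0)
        + (if int l = int j - 1 then g (int i, int j - 1 - int i) * p (int j) else 0))"
    unfolding upper_bidiag_def offset_mat_mult_index[OF i j]
    by (rule sum.cong) (auto simp: upper_times_def offset_one_def)
  also have "\<dots> = times_upper g s p (int i, int j - int i)"
    using assms j unfolding sum.distrib sum_lessThan_if_int_eq
    by (cases "j = 0") (auto simp: times_upper_def algebra_simps)
  finally show "(offset_mat n g * upper_bidiag n s p) $$ (i, j)
      = offset_mat n (times_upper g s p) $$ (i, j)"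
    using i j by simp
qed (simp_all add: upper_bidiag_def)

lemma offset_mat_mult_unit_vec:
  fixes g :: "int \<times> int \<Rightarrow> 'a::semiring_1"
  assumes "i < n"
  shows "offset_mat n g *\<^sub>v unit_vec n i = vec n (\<lambda>j. g (int j, int i - int j))"
proof (rule eq_vecI)
  fix j assume "j < dim_vec (vec n (\<lambda>j. g (int j, int i - int j)))"
  then have j: "j < n" by simp
  have "(offset_mat n g *\<^sub>v unit_vec n i) $ j
      = (\<Sum>l\<in>{0..<n}. g (int j, int l - int j) * (if l = i then 1 else 0))"
    using assms j by (simp add: scalar_prod_def)
  also have "\<dots> = g (int j, int i - int j)"
    using assms by (simp add: if_distrib[of "\<lambda>x. _ * x"] sum.delta' cong: if_cong)
  finally show "(offset_mat n g *\<^sub>v unit_vec n i) $ j = vec n (\<lambda>j. g (int j, int i - int j)) $ j"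
    using j by simp
qed simp

lemma lower_bidiag_mult_unit_vec:
  assumes "i < n"
  shows "lower_bidiag n t *\<^sub>v unit_vec n i
    = t (int i) \<cdot>\<^sub>v unit_vec n i + (if Suc i < n then unit_vec n (Suc i) else 0\<^sub>v n)"
  by (rule eq_vecI)
    (use assms in \<open>auto simp: lower_bidiag_def offset_mat_mult_unit_vec lower_times_def offset_one_def\<close>)

lemma upper_bidiag_mult_unit_vec:
  assumes "i < n"
  shows "upper_bidiag n s p *\<^sub>v unit_vec n i
    = s (int i) \<cdot>\<^sub>v unit_vec n i + (if 0 < i then p (int i) \<cdot>\<^sub>v unit_vec n (i - 1) else 0\<^sub>v n)"
  by (rule eq_vecI)
    (use assms in \<open>auto simp: upper_bidiag_def offset_mat_mult_unit_vec upper_times_def offset_one_def\<close>)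

lemma vanishes_above_offset_one: "vanishes_above offset_one"
  by (simp add: vanishes_above_def offset_one_def)

lemma vanishes_right_offset_one: "vanishes_right n offset_one"
  by (simp add: vanishes_right_def offset_one_def)

lemma vanishes_above_lower_times: "vanishes_above g \<Longrightarrow> vanishes_above (lower_times t g)"
  by (simp add: vanishes_above_def lower_times_def)

lemma vanishes_above_upper_times:
  assumes "p 0 = 0" and "vanishes_above g"
  shows "vanishes_above (upper_times s p g)"
  unfolding vanishes_above_def upper_times_def
proof (intro allI impI, unfold case_prod_conv)
  fix r k :: int assume "r < 0" "0 \<le> r + k"
  then show "s r * g (r, k) + p (r + 1) * g (r + 1, k - 1) = 0"
    using assms by (cases "r = -1") (auto simp: vanishes_above_def)
qed

lemma vanishes_right_lower_times: "vanishes_right n g \<Longrightarrow> vanishes_right n (lower_times t g)"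
  by (simp add: vanishes_right_def lower_times_def)

lemma vanishes_right_upper_times:
  assumes "p (int n) = 0" and "vanishes_right n g"
  shows "vanishes_right n (upper_times s p g)"
  unfolding vanishes_right_def upper_times_def
proof (intro allI impI, unfold case_prod_conv)
  fix r k :: int assume "r < int n" "int n \<le> r + k"
  then show "s r * g (r, k) + p (r + 1) * g (r + 1, k - 1) = 0"
    using assms by (cases "r + 1 = int n") (auto simp: vanishes_right_def)
qed

lemma smult_one_mat_commute:
  fixes X :: "'a::comm_ring_1 mat"
  assumes "X \<in> carrier_mat n n"
  shows "(z \<cdot>\<^sub>m 1\<^sub>m n) * X = X * (z \<cdot>\<^sub>m 1\<^sub>m n)"
  using assms
  by (simp add: mult_smult_assoc_mat[of "1\<^sub>m n" n n X n] mult_smult_distrib[of X n n "1\<^sub>m n" n])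

definition theta_ext :: "'a::field \<Rightarrow> nat \<Rightarrow> int \<Rightarrow> 'a" where
  "theta_ext x d i = (x + of_nat d / 2 - of_int i) * (x + of_nat d / 2 - of_int i + 1)"

definition phi_ext :: "'a::field \<Rightarrow> 'a \<Rightarrow> 'a \<Rightarrow> nat \<Rightarrow> int \<Rightarrow> 'a" where
  "phi_ext a b c d i = of_int i * (of_int i - of_nat d - 1)
     * (a + b + c + of_nat d / 2 - of_int i + 2) * (a + b - c + of_nat d / 2 - of_int i + 1)"

lemma theta_ext_of_nat [simp]: "theta_ext x d (int i) = theta x d i"
  by (simp add: theta_ext_def theta_def)

lemma phi_ext_of_nat [simp]: "phi_ext a b c d (int i) = phi a b c d i"
  by (simp add: phi_ext_def phi_def)

lemma phi_ext_zero: "phi_ext a b c d 0 = 0"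
  by (simp add: phi_ext_def)

lemma phi_ext_Suc_d: "phi_ext a b c d (int (d + 1)) = 0"
  by (simp add: phi_ext_def)

lemma obtain_half:
  assumes "(2::'a) \<noteq> 0"
  obtains h :: "'a::field" where "2 * h = 1" and "\<And>y. y / 2 = y * h"
proof
  show "2 * inverse 2 = (1::'a)"
    using assms by simp
  show "y / 2 = y * inverse 2" for y :: 'a
    by (rule divide_inverse)
qed

locale racah_matrices =
  fixes a b c :: "'a::field" and d :: nat
  assumes two_neq_zero: "(2::'a) \<noteq> 0"
begin

text \<open>\<open>LA\<close>/\<open>RA\<close> (\<open>LB\<close>/\<open>RB\<close>) are left/right multiplication by A (by B) on offset functions.\<close>

abbreviation "LA \<equiv> lower_times (theta_ext a d)"
abbreviation "LB \<equiv> upper_times (theta_ext b d) (phi_ext a b c d)"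
abbreviation "RA g \<equiv> times_lower g (theta_ext a d)"
abbreviation "RB g \<equiv> times_upper g (theta_ext b d) (phi_ext a b c d)"

definition delta :: 'a where
  "delta = of_nat d / 2 * (of_nat d / 2 + 1) + a * (a + 1) + b * (b + 1) + c * (c + 1)"
definition alpha :: 'a where
  "alpha = (c - b) * (c + b + 1) * (a - of_nat d / 2) * (a + of_nat d / 2 + 1)"
definition beta :: 'a where
  "beta = (a - c) * (a + c + 1) * (b - of_nat d / 2) * (b + of_nat d / 2 + 1)"

definition A :: "'a mat" where "A = lower_bidiag (d + 1) (theta_ext a d)"
definition B :: "'a mat" where "B = upper_bidiag (d + 1) (theta_ext b d) (phi_ext a b c d)"
definition C :: "'a mat" where "C = delta \<cdot>\<^sub>m 1\<^sub>m (d + 1) - A - B"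
definition D :: "'a mat" where "D = (1 / 2) \<cdot>\<^sub>m mcomm A B"

definition D_offsets :: "int \<times> int \<Rightarrow> 'a" where
  "D_offsets x = (LA (LB offset_one) x - LB (LA offset_one) x) / 2"

lemma carrier_ABCD:
  "A \<in> carrier_mat (d + 1) (d + 1)" "B \<in> carrier_mat (d + 1) (d + 1)"
  "C \<in> carrier_mat (d + 1) (d + 1)" "D \<in> carrier_mat (d + 1) (d + 1)"
proof -
  show A: "A \<in> carrier_mat (d + 1) (d + 1)" and B: "B \<in> carrier_mat (d + 1) (d + 1)"
    by (simp_all only: A_def B_def lower_bidiag_def upper_bidiag_def offset_mat_carrier)
  then show "C \<in> carrier_mat (d + 1) (d + 1)"
    unfolding C_def by (intro minus_carrier_mat)
  show "D \<in> carrier_mat (d + 1) (d + 1)"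
    unfolding D_def mcomm_def using A B
    by (intro smult_carrier_mat minus_carrier_mat mult_carrier_mat)
qed

lemma A_mult_unit_vec:
  assumes "i \<le> d"
  shows "A *\<^sub>v unit_vec (d + 1) i
    = theta a d i \<cdot>\<^sub>v unit_vec (d + 1) i
      + (if i < d then unit_vec (d + 1) (i + 1) else 0\<^sub>v (d + 1))"
  using lower_bidiag_mult_unit_vec[of i "d + 1" "theta_ext a d"] assms by (simp add: A_def)

lemma B_mult_unit_vec:
  assumes "i \<le> d"
  shows "B *\<^sub>v unit_vec (d + 1) i
    = theta b d i \<cdot>\<^sub>v unit_vec (d + 1) i
      + (if 0 < i then phi a b c d i \<cdot>\<^sub>v unit_vec (d + 1) (i - 1) else 0\<^sub>v (d + 1))"
  using upper_bidiag_mult_unit_vec[of i "d + 1" "theta_ext b d" "phi_ext a b c d"] assms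
  by (simp add: B_def)

lemma A_mult_offset_mat:
  "vanishes_above g \<Longrightarrow> A * offset_mat (d + 1) g = offset_mat (d + 1) (LA g)"
  unfolding A_def by (rule lower_bidiag_mult_offset_mat)

lemma B_mult_offset_mat: "B * offset_mat (d + 1) g = offset_mat (d + 1) (LB g)"
  unfolding B_def by (rule upper_bidiag_mult_offset_mat) (rule phi_ext_Suc_d)

lemma offset_mat_mult_A:
  "vanishes_right (d + 1) g \<Longrightarrow> offset_mat (d + 1) g * A = offset_mat (d + 1) (RA g)"
  unfolding A_def by (rule offset_mat_mult_lower_bidiag)

lemma offset_mat_mult_B: "offset_mat (d + 1) g * B = offset_mat (d + 1) (RB g)"
  unfolding B_def by (rule offset_mat_mult_upper_bidiag) (rule phi_ext_zero)

lemma A_eq_offset_mat: "A = offset_mat (d + 1) (LA offset_one)"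
  by (simp add: A_def lower_bidiag_def)

lemma B_eq_offset_mat: "B = offset_mat (d + 1) (LB offset_one)"
  by (simp add: B_def upper_bidiag_def)

lemma vanishes_above_LA_one: "vanishes_above (LA offset_one)"
  by (intro vanishes_above_lower_times vanishes_above_offset_one)

lemma vanishes_above_LB_one: "vanishes_above (LB offset_one)"
  by (intro vanishes_above_upper_times vanishes_above_offset_one phi_ext_zero)

lemmas AB_products =
  A_mult_offset_mat[OF vanishes_above_LA_one, folded A_eq_offset_mat]
  A_mult_offset_mat[OF vanishes_above_LB_one, folded B_eq_offset_mat]
  B_mult_offset_mat[of "LA offset_one", folded A_eq_offset_mat]
  B_mult_offset_mat[of "LB offset_one", folded B_eq_offset_mat]

lemma D_eq_offset_mat: "D = offset_mat (d + 1) D_offsets"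
  unfolding D_def mcomm_def AB_products offset_mat_diff offset_mat_smult
  by (rule offset_mat_cong) (simp add: D_offsets_def)

lemma vanishes_above_D_offsets: "vanishes_above D_offsets"
proof -
  have "vanishes_above (LA (LB offset_one))" "vanishes_above (LB (LA offset_one))"
    by (intro vanishes_above_lower_times vanishes_above_upper_times vanishes_above_offset_one
        phi_ext_zero)+
  then show ?thesis by (simp add: vanishes_above_def D_offsets_def)
qed

lemma vanishes_right_D_offsets: "vanishes_right (d + 1) D_offsets"
proof -
  have "vanishes_right (d + 1) (LA (LB offset_one))" "vanishes_right (d + 1) (LB (LA offset_one))"
    by (intro vanishes_right_lower_times vanishes_right_upper_times vanishes_right_offset_one
        phi_ext_Suc_d)+
  then show ?thesis by (simp add: vanishes_right_def D_offsets_def)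
qed

lemmas D_products =
  A_mult_offset_mat[OF vanishes_above_D_offsets, folded D_eq_offset_mat]
  B_mult_offset_mat[of D_offsets, folded D_eq_offset_mat]
  offset_mat_mult_A[OF vanishes_right_D_offsets, folded D_eq_offset_mat]
  offset_mat_mult_B[of D_offsets, folded D_eq_offset_mat]

lemma C_mult:
  assumes "X \<in> carrier_mat (d + 1) (d + 1)"
  shows "C * X = delta \<cdot>\<^sub>m X - A * X - B * X"
proof -
  have "(delta \<cdot>\<^sub>m 1\<^sub>m (d + 1)) * X = delta \<cdot>\<^sub>m (1\<^sub>m (d + 1) * X)"
    by (rule mult_smult_assoc_mat[OF one_carrier_mat assms])
  also have "\<dots> = delta \<cdot>\<^sub>m X"
    using assms by simp
  finally have "(delta \<cdot>\<^sub>m 1\<^sub>m (d + 1)) * X = delta \<cdot>\<^sub>m X" .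
  with assms carrier_ABCD show ?thesis
    unfolding C_def by (simp add: minus_mult_distrib_mat[of _ "d + 1" "d + 1"] minus_carrier_mat)
qed

lemma mult_C:
  assumes "X \<in> carrier_mat (d + 1) (d + 1)"
  shows "X * C = delta \<cdot>\<^sub>m X - X * A - X * B"
proof -
  have carrier_diff: "delta \<cdot>\<^sub>m 1\<^sub>m (d + 1) - A \<in> carrier_mat (d + 1) (d + 1)"
    using carrier_ABCD by (simp add: minus_carrier_mat)
  have "X * C = X * (delta \<cdot>\<^sub>m 1\<^sub>m (d + 1) - A) - X * B"
    unfolding C_def by (rule mult_minus_distrib_mat[OF assms carrier_diff carrier_ABCD(2)])
  also have "X * (delta \<cdot>\<^sub>m 1\<^sub>m (d + 1) - A) = X * (delta \<cdot>\<^sub>m 1\<^sub>m (d + 1)) - X * A"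
    by (rule mult_minus_distrib_mat[OF assms _ carrier_ABCD(1)]) simp
  also have "X * (delta \<cdot>\<^sub>m 1\<^sub>m (d + 1)) = delta \<cdot>\<^sub>m (X * 1\<^sub>m (d + 1))"
    by (rule mult_smult_distrib[OF assms one_carrier_mat])
  finally show ?thesis
    using assms by simp
qed

lemmas offset_defs =
  D_offsets_def offset_one_def lower_times_def upper_times_def times_lower_def times_upper_def

lemmas scalar_defs =
  delta_def alpha_def beta_def theta_ext_def phi_ext_def
  of_int_add of_int_diff of_int_1 of_int_numeral of_int_minus

text \<open>The entries of \<open>racah_alpha A B C D\<close> after expanding C. Naming \<open>1/2\<close> by an opaque h
  keeps the goals polynomial; the integer hypothesis on k has to be discarded before
  \<open>Groebner_Basis.algebra\<close> (qualified, as HOL-Algebra's \<open>algebra\<close> shadows it).\<close>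

lemma alpha_offsets:
  "LA D_offsets x - RA D_offsets x
     + (delta * LA offset_one x - LA (LA offset_one) x - LA (LB offset_one) x) - LB (LA offset_one) x
   = alpha * offset_one x"
proof -
  obtain r k where x: "x = (r, k)" by fastforce
  obtain h :: 'a where h: "2 * h = 1" and half: "\<And>y. y / 2 = y * h"
    using obtain_half[OF two_neq_zero] by blast
  consider "k = -2" | "k = -1" | "k = 0" | "k = 1" | "k = 2" | "k \<le> -3" | "3 \<le> k" by linarith
  then show ?thesis
    by cases (simp add: x offset_defs; thin_tac "k = _"; simp only: scalar_defs half;
        insert h; Groebner_Basis.algebra)+
qed

lemma beta_offsets:
  "LB D_offsets x - RB D_offsets x + LB (LA offset_one) x
     - (delta * LB offset_one x - LA (LB offset_one) x - LB (LB offset_one) x)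
   = beta * offset_one x"
proof -
  obtain r k where x: "x = (r, k)" by fastforce
  obtain h :: 'a where h: "2 * h = 1" and half: "\<And>y. y / 2 = y * h"
    using obtain_half[OF two_neq_zero] by blast
  consider "k = -2" | "k = -1" | "k = 0" | "k = 1" | "k = 2" | "k \<le> -3" | "3 \<le> k" by linarith
  then show ?thesis
    by cases (simp add: x offset_defs; thin_tac "k = _"; simp only: scalar_defs half;
        insert h; Groebner_Basis.algebra)+
qed

lemma gamma_offsets:
  "delta * D_offsets x - LA D_offsets x - LB D_offsets x
     - (delta * D_offsets x - RA D_offsets x - RB D_offsets x)
     + (delta * LB offset_one x - LA (LB offset_one) x - LB (LB offset_one) x)
     - (delta * LA offset_one x - LA (LA offset_one) x - LA (LB offset_one) x)
   = (- alpha - beta) * offset_one x"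
  using alpha_offsets[of x] beta_offsets[of x] by Groebner_Basis.algebra

lemmas to_offset_mat =
  A_eq_offset_mat B_eq_offset_mat D_eq_offset_mat offset_mat_one[symmetric]
  offset_mat_smult offset_mat_diff offset_mat_add

lemma mcomm_A_B: "mcomm A B = 2 \<cdot>\<^sub>m D"
  unfolding mcomm_def AB_products
  unfolding to_offset_mat
  by (rule offset_mat_cong) (simp add: D_offsets_def two_neq_zero)

lemma mcomm_B_C: "mcomm B C = 2 \<cdot>\<^sub>m D"
  unfolding mcomm_def mult_C[OF carrier_ABCD(2)] C_mult[OF carrier_ABCD(2)] AB_products
  unfolding to_offset_mat
  by (rule offset_mat_cong) (simp add: D_offsets_def two_neq_zero)

lemma mcomm_C_A: "mcomm C A = 2 \<cdot>\<^sub>m D"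
  unfolding mcomm_def mult_C[OF carrier_ABCD(1)] C_mult[OF carrier_ABCD(1)] AB_products
  unfolding to_offset_mat
  by (rule offset_mat_cong) (simp add: D_offsets_def two_neq_zero)

lemma racah_alpha_eq: "racah_alpha A B C D = alpha \<cdot>\<^sub>m 1\<^sub>m (d + 1)"
  unfolding racah_alpha_def mcomm_def mult_C[OF carrier_ABCD(1)] AB_products D_products
  unfolding to_offset_mat
  by (rule offset_mat_cong) (rule alpha_offsets)

lemma racah_beta_eq: "racah_beta A B C D = beta \<cdot>\<^sub>m 1\<^sub>m (d + 1)"
  unfolding racah_beta_def mcomm_def C_mult[OF carrier_ABCD(2)] AB_products D_products
  unfolding to_offset_mat
  by (rule offset_mat_cong) (rule beta_offsets)

lemma racah_gamma_eq: "racah_gamma A B C D = (- alpha - beta) \<cdot>\<^sub>m 1\<^sub>m (d + 1)"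
  unfolding racah_gamma_def mcomm_def C_mult[OF carrier_ABCD(4)] mult_C[OF carrier_ABCD(4)]
    C_mult[OF carrier_ABCD(2)] mult_C[OF carrier_ABCD(1)] AB_products D_products
  unfolding to_offset_mat
  by (rule offset_mat_cong) (rule gamma_offsets)

lemma A_plus_B_plus_C: "A + B + C = delta \<cdot>\<^sub>m 1\<^sub>m (d + 1)"
  unfolding C_def to_offset_mat by (rule offset_mat_cong) simp

lemma racah_module_ABCD: "racah_module (d + 1) A B C D"
  unfolding racah_module_def racah_alpha_eq racah_beta_eq racah_gamma_eq
  using carrier_ABCD mcomm_A_B mcomm_B_C mcomm_C_A by (simp add: smult_one_mat_commute)

end

text \<open>The construction works over any field of characteristic \<open>\<noteq> 2\<close>.\<close>

theorem proposition2p4: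
  fixes a b c :: "'a::field" and d :: nat
  assumes "alg_closed_field TYPE('a)"
    and "(2::'a) \<noteq> 0"
  shows "\<exists>A B C D :: 'a mat.
    racah_module (d + 1) A B C D \<and>
    (\<forall>i \<le> d. A *\<^sub>v unit_vec (d + 1) i =
        theta a d i \<cdot>\<^sub>v unit_vec (d + 1) i
        + (if i < d then unit_vec (d + 1) (i + 1) else 0\<^sub>v (d + 1))) \<and>
    (\<forall>i \<le> d. B *\<^sub>v unit_vec (d + 1) i =
        theta b d i \<cdot>\<^sub>v unit_vec (d + 1) i
        + (if 0 < i then phi a b c d i \<cdot>\<^sub>v unit_vec (d + 1) (i - 1) else 0\<^sub>v (d + 1))) \<and>
    racah_alpha A B C D = ((c - b) * (c + b + 1) * (a - of_nat d / 2) * (a + of_nat d / 2 + 1))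
        \<cdot>\<^sub>m 1\<^sub>m (d + 1) \<and>
    racah_beta A B C D = ((a - c) * (a + c + 1) * (b - of_nat d / 2) * (b + of_nat d / 2 + 1))
        \<cdot>\<^sub>m 1\<^sub>m (d + 1) \<and>
    A + B + C = (of_nat d / 2 * (of_nat d / 2 + 1) + a * (a + 1) + b * (b + 1) + c * (c + 1))
        \<cdot>\<^sub>m 1\<^sub>m (d + 1)"
proof -
  interpret racah_matrices a b c d
    by unfold_locales (rule assms(2))
  show ?thesis
    using racah_module_ABCD A_mult_unit_vec B_mult_unit_vec racah_alpha_eq racah_beta_eq A_plus_B_plus_C
    unfolding alpha_def beta_def delta_def by blast
qed

end
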